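(* Let $G$ be a (nonempty) complete graph whose vertices are each colored $A$, $B$ or $C$. The value of the Normal Partizan Domination game on $G$ is $1$ if every vertex has color $A$, is $-1$ if every vertex has color $B$, and is $*$ otherwise.
   Context: Normal Partizan Domination game: a finite graph $G$ has each vertex colored $A$, $B$ or $C$. Alice and Bob alternately select a vertex; Alice may only select vertices colored $A$ or $C$, Bob only vertices colored $B$ or $C$. A vertex $u$ dominates $v$ if $u=v$ or $uv$ is an edge. A vertex may be selected only if it is playable, i.e. it dominates at least one vertex not dominated by the previously selected vertices; the game ends when the selected vertices form a dominating set. Under normal play the player unable to move loses. The game is regarded as a partizan combinatorial game with Alice as Left and Bob as Right, and its value is its value in Conway's combinatorial game theory ($\{X\mid Y\}$ has Left options $X$ and Right options $Y$; $G=H$ iff $G+(-H)$ is a second-player win). Here $1=\{0\mid\}$, $-1=\{\mid 0\}$, $*=\{0\mid 0\}$, $0=\{\mid\}$. *)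

theory Defs
  imports Main
begin

datatype game = Game "game list" "game list"

primrec neg :: "game \<Rightarrow> game" where
  "neg (Game L R) = Game (map neg R) (map neg L)"

function gplus :: "game \<Rightarrow> game \<Rightarrow> game" where
  "gplus (Game L1 R1) (Game L2 R2) =
     Game (map (\<lambda>x. gplus x (Game L2 R2)) L1 @ map (\<lambda>y. gplus (Game L1 R1) y) L2)
          (map (\<lambda>x. gplus x (Game L2 R2)) R1 @ map (\<lambda>y. gplus (Game L1 R1) y) R2)"
  by pat_completeness auto
termination
  by (relation "measure (\<lambda>(x, y). size x + size y)")
     (auto dest!: size_list_estimation' [where f = size and y = "size _", OF _ order_refl] )

text \<open>Normal play: (Left moving first wins, Right moving first wins).\<close>
primrec first_wins :: "game \<Rightarrow> bool \<times> bool" where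
  "first_wins (Game L R) =
     ((\<exists>b \<in> set (map (\<lambda>x. snd (first_wins x)) L). \<not> b),
      (\<exists>b \<in> set (map (\<lambda>x. fst (first_wins x)) R). \<not> b))"

definition second_player_win :: "game \<Rightarrow> bool" where
  "second_player_win G \<longleftrightarrow> \<not> fst (first_wins G) \<and> \<not> snd (first_wins G)"

definition game_eq :: "game \<Rightarrow> game \<Rightarrow> bool" where
  "game_eq G H \<longleftrightarrow> second_player_win (gplus G (neg H))"

definition g_zero :: game where "g_zero = Game [] []"
definition g_one :: game where "g_one = Game [g_zero] []"
definition g_minus_one :: game where "g_minus_one = Game [] [g_zero]"
definition g_star :: game where "g_star = Game [g_zero] [g_zero]"

datatype color = CA | CB | CC

definition cnbhd :: "'a list \<Rightarrow> ('a \<Rightarrow> 'a \<Rightarrow> bool) \<Rightarrow> 'a \<Rightarrow> 'a set" where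
  "cnbhd vs E v = {u \<in> set vs. u = v \<or> E v u}"

text \<open>Game position: D = set of vertices dominated by the previously selected vertices.
  A vertex is playable iff it dominates a vertex not in D.\<close>
function dom_pos :: "'a list \<Rightarrow> ('a \<Rightarrow> 'a \<Rightarrow> bool) \<Rightarrow> ('a \<Rightarrow> color) \<Rightarrow> 'a set \<Rightarrow> game" where
  "dom_pos vs E c D =
     Game (map (\<lambda>v. dom_pos vs E c (D \<union> cnbhd vs E v))
               (filter (\<lambda>v. c v \<noteq> CB \<and> \<not> cnbhd vs E v \<subseteq> D) vs))
          (map (\<lambda>v. dom_pos vs E c (D \<union> cnbhd vs E v))
               (filter (\<lambda>v. c v \<noteq> CA \<and> \<not> cnbhd vs E v \<subseteq> D) vs))"
  by pat_completeness auto
termination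
proof (relation "measure (\<lambda>(vs, E, c, D). card (set vs - D))", goal_cases)
  case 1 show ?case by simp
next
  case (2 vs E c D v)
  have "set vs - (D \<union> cnbhd vs E v) \<subset> set vs - D"
    using 2 by (auto simp: cnbhd_def)
  then show ?case by (simp add: psubset_card_mono)
next
  case (3 vs E c D v)
  have "set vs - (D \<union> cnbhd vs E v) \<subset> set vs - D"
    using 3 by (auto simp: cnbhd_def)
  then show ?case by (simp add: psubset_card_mono)
qed

text \<open>The list enumerating V
  only fixes an order of options, which does not affect the game's value.\<close>
definition domination_game :: "'a set \<Rightarrow> ('a \<Rightarrow> 'a \<Rightarrow> bool) \<Rightarrow> ('a \<Rightarrow> color) \<Rightarrow> game" where
  "domination_game V E c = dom_pos (SOME vs. distinct vs \<and> set vs = V) E c {}"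

end

theory Submission
  imports Defs
begin

text \<open>In a complete graph every vertex dominates the whole graph, so each first move ends
  the game: every option of the initial position is \<open>0\<close>. A game \<open>{0,\<dots>,0 | 0,\<dots>,0}\<close> is
  \<open>1\<close>, \<open>-1\<close> or \<open>*\<close> according to which of the two players has a move at all.\<close>

lemma game_eq_one_if_left_options_zero:
  assumes "set L = {g_zero}"
  shows "game_eq (Game L []) g_one"
  using assms by (auto simp: game_eq_def second_player_win_def g_one_def g_zero_def)

lemma game_eq_minus_one_if_right_options_zero:
  assumes "set R = {g_zero}"
  shows "game_eq (Game [] R) g_minus_one"
  using assms by (auto simp: game_eq_def second_player_win_def g_minus_one_def g_zero_def)

lemma game_eq_star_if_options_zero:
  assumes "set L = {g_zero}" and "set R = {g_zero}"
  shows "game_eq (Game L R) g_star"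
  using assms by (auto simp: game_eq_def second_player_win_def g_star_def g_zero_def)

declare dom_pos.simps [simp del]

lemma dom_pos_dominated:
  assumes "set vs \<subseteq> D"
  shows "dom_pos vs E c D = g_zero"
  using assms by (subst dom_pos.simps) (auto simp: g_zero_def cnbhd_def filter_empty_conv)

lemma dom_pos_all_vertices_universal:
  assumes universal: "\<And>v. v \<in> set vs \<Longrightarrow> cnbhd vs E v = set vs"
    and undominated: "\<not> set vs \<subseteq> D"
  shows "dom_pos vs E c D =
           Game (map (\<lambda>_. g_zero) (filter (\<lambda>v. c v \<noteq> CB) vs))
                (map (\<lambda>_. g_zero) (filter (\<lambda>v. c v \<noteq> CA) vs))"
proof -
  have "dom_pos vs E c (D \<union> cnbhd vs E v) = g_zero" if "v \<in> set vs" for v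
    using that universal by (simp add: dom_pos_dominated)
  moreover have "filter (\<lambda>v. P v \<and> \<not> cnbhd vs E v \<subseteq> D) vs = filter P vs" for P
    using universal undominated by (intro filter_cong) auto
  ultimately show ?thesis
    by (subst dom_pos.simps) simp
qed

lemma domination_game_as_dom_pos:
  assumes "finite V"
  obtains vs where "set vs = V" and "domination_game V E c = dom_pos vs E c {}"
proof
  let ?vs = "SOME vs. distinct vs \<and> set vs = V"
  have "\<exists>vs. distinct vs \<and> set vs = V"
    using assms finite_distinct_list by blast
  then show "set ?vs = V"
    by (metis (mono_tags, lifting) someI_ex)
  show "domination_game V E c = dom_pos ?vs E c {}"
    by (simp add: domination_game_def)
qed

lemma set_map_const_zero_eq: "set (map (\<lambda>_. g_zero) xs) = {g_zero} \<longleftrightarrow> xs \<noteq> []"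
  by (cases xs) auto

theorem proposition3:
  fixes V :: "'a set" and E :: "'a \<Rightarrow> 'a \<Rightarrow> bool" and c :: "'a \<Rightarrow> color"
  assumes "finite V" and "V \<noteq> {}"
    and "\<And>u v. E u v \<Longrightarrow> E v u"
    and "\<And>v. \<not> E v v"
    and "\<And>u v. E u v \<Longrightarrow> u \<in> V \<and> v \<in> V"
    and "\<And>u v. u \<in> V \<Longrightarrow> v \<in> V \<Longrightarrow> u \<noteq> v \<Longrightarrow> E u v"
  shows "((\<forall>v\<in>V. c v = CA) \<longrightarrow> game_eq (domination_game V E c) g_one)
       \<and> ((\<forall>v\<in>V. c v = CB) \<longrightarrow> game_eq (domination_game V E c) g_minus_one)
       \<and> ((\<not> (\<forall>v\<in>V. c v = CA) \<and> \<not> (\<forall>v\<in>V. c v = CB)) \<longrightarrow> game_eq (domination_game V E c) g_star)"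
proof -
  obtain vs where vs: "set vs = V" and game: "domination_game V E c = dom_pos vs E c {}"
    using domination_game_as_dom_pos[OF assms(1)] .
  define L where "L = map (\<lambda>_. g_zero) (filter (\<lambda>v. c v \<noteq> CB) vs)"
  define R where "R = map (\<lambda>_. g_zero) (filter (\<lambda>v. c v \<noteq> CA) vs)"
  have "cnbhd vs E v = set vs" if "v \<in> set vs" for v
    using that vs assms(6) by (auto simp: cnbhd_def)
  then have game_LR: "domination_game V E c = Game L R"
    unfolding game L_def R_def using vs assms(2) by (intro dom_pos_all_vertices_universal) auto
  have L_zeros: "set L = {g_zero} \<longleftrightarrow> \<not> (\<forall>v\<in>V. c v = CB)"
    and L_Nil: "L = [] \<longleftrightarrow> (\<forall>v\<in>V. c v = CB)"
    unfolding L_def set_map_const_zero_eq using vs by (auto simp: filter_empty_conv)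
  have R_zeros: "set R = {g_zero} \<longleftrightarrow> \<not> (\<forall>v\<in>V. c v = CA)"
    and R_Nil: "R = [] \<longleftrightarrow> (\<forall>v\<in>V. c v = CA)"
    unfolding R_def set_map_const_zero_eq using vs by (auto simp: filter_empty_conv)
  have "\<not> ((\<forall>v\<in>V. c v = CA) \<and> (\<forall>v\<in>V. c v = CB))"
    using assms(2) by fastforce
  then show ?thesis
    unfolding game_LR using L_zeros L_Nil R_zeros R_Nil
    by (metis game_eq_one_if_left_options_zero game_eq_minus_one_if_right_options_zero
        game_eq_star_if_options_zero)
qed

end
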